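(* Let $m\ge2$, $G=CK(2m-1)$, and let $B$ be a set of edges of Class A with parameters $\alpha,\delta$ (so that $B$ contains all edges of the boundary path $\langle\alpha,\alpha+1,\dots,m-\delta\rangle$). Let $F$ be a simple Hamiltonian path of $G$. If some edge of $F$ connects two vertices of the path $\langle\alpha,\alpha+1,\dots,m-\delta\rangle$, then $F$ and $B$ have an edge in common.
   Context: $CK(2m-1)$ is the complete convex geometric graph on $2m-1$ points in convex position, labelled clockwise $0,\dots,2m-2$ (elements of $\mathbb{Z}_{2m-1}$; indices mod $2m-1$), with all segments as edges. A simple Hamiltonian path is a path through all vertices whose edges pairwise do not cross. Class A: sets consisting of the following edges, for integers $\alpha,\delta\ge0$ with $\alpha+\delta\le m-2$: (1) all edges of the boundary path $\langle\alpha,\alpha+1,\dots,m-\delta\rangle$; (2) the edges $[i-1-\epsilon_i,\,i+\epsilon_i]$, $1\le i\le\alpha$, with $\epsilon_1>\dots>\epsilon_\alpha>0$ and $\alpha-i+1\le\epsilon_i\le m-\delta-i-1$; (3) the edges $[m-j-\xi_j,\,m-j+1+\xi_j]$, $1\le j\le\delta$, with $\xi_1>\dots>\xi_\delta>0$ and $\delta+1-j\le\xi_j\le m-j-\alpha-1$; and in addition $\epsilon_1+\xi_1\le m-2$ (when $\alpha,\delta>0$). *)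

theory Defs
  imports Main
begin

(* Vertices of CK(2m-1): the integers 0..2m-2 in clockwise order; edges are 2-sets. *)

definition vtx :: "nat \<Rightarrow> int \<Rightarrow> int" where
  "vtx m k = k mod (2 * int m - 1)"

definition cedge :: "nat \<Rightarrow> int \<Rightarrow> int \<Rightarrow> int set" where
  "cedge m a b = {vtx m a, vtx m b}"

(* two segments between points in convex position cross iff their four
   (distinct) endpoints interleave *)
definition crosses :: "int set \<Rightarrow> int set \<Rightarrow> bool" where
  "crosses e f \<longleftrightarrow> (\<exists>a b c d. e = {a, b} \<and> f = {c, d} \<and> a < c \<and> c < b \<and> (d < a \<or> b < d))"

definition path_edges :: "int list \<Rightarrow> int set set" where
  "path_edges ps = {{ps ! i, ps ! Suc i} | i. Suc i < length ps}"

definition simple_ham_path :: "nat \<Rightarrow> int set set \<Rightarrow> bool" where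
  "simple_ham_path m F \<longleftrightarrow>
     (\<exists>ps. distinct ps \<and> set ps = {0..<2 * int m - 1} \<and> F = path_edges ps \<and>
           (\<forall>e\<in>F. \<forall>f\<in>F. \<not> crosses e f))"

definition classA :: "nat \<Rightarrow> nat \<Rightarrow> nat \<Rightarrow> int set set \<Rightarrow> bool" where
  "classA m \<alpha> \<delta> B \<longleftrightarrow>
     int \<alpha> + int \<delta> \<le> int m - 2 \<and>
     (\<exists>\<epsilon> \<xi> :: nat \<Rightarrow> int.
        (\<forall>i j. 1 \<le> i \<and> i < j \<and> j \<le> \<alpha> \<longrightarrow> \<epsilon> j < \<epsilon> i) \<and>
        (\<forall>i. 1 \<le> i \<and> i \<le> \<alpha> \<longrightarrow> 0 < \<epsilon> i \<and>
              int \<alpha> - int i + 1 \<le> \<epsilon> i \<and> \<epsilon> i \<le> int m - int \<delta> - int i - 1) \<and>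
        (\<forall>i j. 1 \<le> i \<and> i < j \<and> j \<le> \<delta> \<longrightarrow> \<xi> j < \<xi> i) \<and>
        (\<forall>j. 1 \<le> j \<and> j \<le> \<delta> \<longrightarrow> 0 < \<xi> j \<and>
              int \<delta> + 1 - int j \<le> \<xi> j \<and> \<xi> j \<le> int m - int j - int \<alpha> - 1) \<and>
        (0 < \<alpha> \<and> 0 < \<delta> \<longrightarrow> \<epsilon> 1 + \<xi> 1 \<le> int m - 2) \<and>
        B = {cedge m k (k + 1) | k. int \<alpha> \<le> k \<and> k < int m - int \<delta>}
          \<union> {cedge m (int i - 1 - \<epsilon> i) (int i + \<epsilon> i) | i. 1 \<le> i \<and> i \<le> \<alpha>}
          \<union> {cedge m (int m - int j - \<xi> j) (int m - int j + 1 + \<xi> j) | j. 1 \<le> j \<and> j \<le> \<delta>})"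

end

theory Submission
  imports Defs
begin

(* Let {a, b}, a < b, be an edge of the path inside the boundary path with b - a minimal.
   If b > a + 1, the path visits both a and a + 1, so some edge {u, w} of it leaves the open
   interval (a, b) from u.  If w is a or b this is a shorter such edge; otherwise {u, w} crosses
   {a, b}.  Hence b = a + 1, and every boundary edge [c, c + 1] of the boundary path lies in B. *)

lemma list_adjacent_change:
  assumes "x \<in> set xs" "y \<in> set xs" "P x" "\<not> P y"
  shows "\<exists>k. Suc k < length xs \<and> P (xs ! k) \<noteq> P (xs ! Suc k)"
proof (rule ccontr)
  assume no_change: "\<not> ?thesis"
  have const: "k < length xs \<Longrightarrow> P (xs ! k) = P (xs ! 0)" for k
    using no_change by (induction k) auto
  obtain i j where "i < length xs" "xs ! i = x" "j < length xs" "xs ! j = y"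
    using assms(1,2) by (metis in_set_conv_nth)
  then show False using const assms(3,4) by metis
qed

lemma path_edges_leaving_set:
  assumes "x \<in> set ps" "y \<in> set ps" "x \<in> S" "y \<notin> S"
  obtains u w where "{u, w} \<in> path_edges ps" "u \<in> S" "w \<notin> S"
proof -
  obtain k where k: "Suc k < length ps" "(ps ! k \<in> S) \<noteq> (ps ! Suc k \<in> S)"
    using list_adjacent_change[of x ps y "\<lambda>v. v \<in> S"] assms by blast
  then have "{ps ! k, ps ! Suc k} \<in> path_edges ps" "{ps ! Suc k, ps ! k} \<in> path_edges ps"
    unfolding path_edges_def by (auto simp: insert_commute)
  then show thesis using that k(2) by blast
qed

lemma path_edge_ordered:
  assumes "distinct ps" "e \<in> path_edges ps"
  obtains a b where "e = {a, b}" "a < b"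
proof -
  obtain i where i: "Suc i < length ps" "e = {ps ! i, ps ! Suc i}"
    using assms(2) unfolding path_edges_def by blast
  have "ps ! i \<noteq> ps ! Suc i" using assms(1) i(1) by (simp add: nth_eq_iff_index_eq)
  then show thesis
    using that[of "ps ! i" "ps ! Suc i"] that[of "ps ! Suc i" "ps ! i"] i(2)
    by (metis insert_commute linorder_neqE)
qed

lemma noncrossing_path_edge_spans_unit_edge:
  assumes noncrossing: "\<forall>e\<in>path_edges ps. \<forall>f\<in>path_edges ps. \<not> crosses e f"
    and covers: "{a..b} \<subseteq> set ps"
    and edge: "{a, b} \<in> path_edges ps" "a < b"
  shows "\<exists>c. a \<le> c \<and> c < b \<and> {c, c + 1} \<in> path_edges ps"
  using covers edge
proof (induction "nat (b - a)" arbitrary: a b rule: less_induct)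
  case less
  show ?case
  proof (cases "b = a + 1")
    case True
    then show ?thesis using less.prems by auto
  next
    case False
    have "a + 1 \<in> set ps" "a \<in> set ps" "a + 1 \<in> {a<..<b}" "a \<notin> {a<..<b}"
      using less.prems False by auto
    then obtain u w where uw: "{u, w} \<in> path_edges ps" "a < u" "u < b" "\<not> (a < w \<and> w < b)"
      by (rule path_edges_leaving_set) auto
    consider "w = a" | "w = b" | "w < a \<or> b < w" using uw(4) by linarith
    then show ?thesis
    proof cases
      case 1
      then have "{a, u} \<in> path_edges ps" using uw(1) by (simp add: insert_commute)
      moreover have "{a..u} \<subseteq> set ps" using less.prems(1) uw(3) by auto
      moreover have "nat (u - a) < nat (b - a)" using uw(2,3) by auto
      ultimately obtain c where "a \<le> c" "c < u" "{c, c + 1} \<in> path_edges ps"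
        using less.hyps[of u a] uw(2,3) by blast
      then show ?thesis using uw(2,3) by (auto intro!: exI[of _ c])
    next
      case 2
      then have "{u, b} \<in> path_edges ps" using uw(1) by simp
      moreover have "{u..b} \<subseteq> set ps" using less.prems(1) uw(2) by auto
      moreover have "nat (b - u) < nat (b - a)" using uw(2,3) by auto
      ultimately obtain c where "u \<le> c" "c < b" "{c, c + 1} \<in> path_edges ps"
        using less.hyps[of b u] uw(2,3) by blast
      then show ?thesis using uw(2,3) by (auto intro!: exI[of _ c])
    next
      case 3
      then have "crosses {a, b} {u, w}" unfolding crosses_def using uw less.prems by blast
      then show ?thesis using noncrossing uw(1) less.prems(2) by blast
    qed
  qed
qed

lemma classA_boundary_edge:
  assumes "classA m \<alpha> \<delta> B" "int \<alpha> \<le> c" "c < int m - int \<delta>"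
  shows "{c, c + 1} \<in> B"
proof -
  have "int \<alpha> + int \<delta> \<le> int m - 2" and "cedge m c (c + 1) \<in> B"
    using assms unfolding classA_def by blast+
  moreover have "cedge m c (c + 1) = {c, c + 1}"
    unfolding cedge_def vtx_def using assms(2,3) calculation(1) by auto
  ultimately show ?thesis by simp
qed

theorem mainTheorem11:
  fixes m \<alpha> \<delta> :: nat and B F :: "int set set"
  assumes "m \<ge> 2"
    and "classA m \<alpha> \<delta> B"
    and "simple_ham_path m F"
    and "\<exists>e\<in>F. e \<subseteq> {int \<alpha>..int m - int \<delta>}"
  shows "F \<inter> B \<noteq> {}"
proof -
  obtain ps where ps: "distinct ps" "set ps = {0..<2 * int m - 1}" "F = path_edges ps"
    and noncrossing: "\<forall>e\<in>F. \<forall>f\<in>F. \<not> crosses e f"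
    using assms(3) unfolding simple_ham_path_def by blast
  obtain e where e: "e \<in> F" "e \<subseteq> {int \<alpha>..int m - int \<delta>}" using assms(4) by blast
  then obtain a b where ab: "e = {a, b}" "a < b"
    using path_edge_ordered ps(1,3) by blast
  have "{a..b} \<subseteq> set ps" using e(2) ab ps(2) assms(1) by auto
  then obtain c where "a \<le> c" "c < b" "{c, c + 1} \<in> F"
    using noncrossing_path_edge_spans_unit_edge[of ps a b] noncrossing e(1) ab ps(3) by auto
  moreover have "{c, c + 1} \<in> B"
    using classA_boundary_edge[OF assms(2)] calculation(1,2) e(2) ab by auto
  ultimately show ?thesis by blast
qed

end
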